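(* Let $X$ and $Y$ be Banach spaces with normalized Schauder bases $(x_i)_i$ and $(y_i)_i$ respectively, where $(x_i)_i$ is unconditional and $(y_i^* )_i$ is submultiplicative. Let $M=\{m_1<m_2<\cdots\}$ and $N=\{n_1<n_2<\cdots\}$ be subsets of $\mathbb{N}$ with $M\cup N=\mathbb{N}$. Define a norm on $c_{00}(\mathbb{N})$ by $\|\sum_i a_ie_i\|=\max\{\|\sum_i a_{m_i}x_i\|,\|\sum_i a_{n_i}y_i\|\}$ and let $W$ be the completion. Then the sequence $(e_i^* )_i$ in $W^*$ is submultiplicative.
   Context: $(e_i)$ is the unit vector basis of $c_{00}(\mathbb{N})$; $(y_i^* )$ and $(e_i^* )$ are biorthogonal functionals. A sequence $(z_i)_i$ is submultiplicative if there is $C>0$ with $\|\sum_{i=1}^na_ib_iz_i\|\le C\|\sum_{i=1}^na_iz_i\|\|\sum_{i=1}^nb_iz_i\|$ for all $n$ and all scalars $(a_i)_{i=1}^n,(b_i)_{i=1}^n$. *)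

theory Defs
  imports "HOL-Analysis.Analysis"
begin

definition schauder_basis :: "(nat \<Rightarrow> 'a::banach) \<Rightarrow> bool" where
  "schauder_basis x \<longleftrightarrow> (\<forall>v. \<exists>!c. (\<lambda>i. c i *\<^sub>R x i) sums v)"

definition normalized_schauder_basis :: "(nat \<Rightarrow> 'a::banach) \<Rightarrow> bool" where
  "normalized_schauder_basis x \<longleftrightarrow> schauder_basis x \<and> (\<forall>i. norm (x i) = 1)"

definition unconditional_basis :: "(nat \<Rightarrow> 'a::banach) \<Rightarrow> bool" where
  "unconditional_basis x \<longleftrightarrow> schauder_basis x \<and>
     (\<forall>v c. (\<lambda>i. c i *\<^sub>R x i) sums v \<longrightarrow> ((\<lambda>i. c i *\<^sub>R x i) has_sum v) UNIV)"

definition coord :: "(nat \<Rightarrow> 'a::banach) \<Rightarrow> nat \<Rightarrow> 'a \<Rightarrow> real" where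
  "coord x i v = (THE c. (\<lambda>j. c j *\<^sub>R x j) sums v) i"

text \<open>Submultiplicativity of a sequence (z_i), given the function
  K a \<mapsto> norm (\<Sum>i<K. a i z_i).\<close>
definition submultiplicative :: "(nat \<Rightarrow> (nat \<Rightarrow> real) \<Rightarrow> real) \<Rightarrow> bool" where
  "submultiplicative nrm \<longleftrightarrow> (\<exists>C>0. \<forall>K a b.
      nrm K (\<lambda>i. a i * b i) \<le> C * nrm K a * nrm K b)"

text \<open>Norm in Y^* of \<Sum>i<K. a i y_i^*.\<close>
definition dual_comb_norm :: "(nat \<Rightarrow> 'a::banach) \<Rightarrow> nat \<Rightarrow> (nat \<Rightarrow> real) \<Rightarrow> real" where
  "dual_comb_norm y K a = onorm (\<lambda>v. \<Sum>i<K. a i * coord y i v)"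

definition c00 :: "(nat \<Rightarrow> real) \<Rightarrow> bool" where
  "c00 c \<longleftrightarrow> finite {i. c i \<noteq> 0}"

definition W_norm :: "(nat \<Rightarrow> 'a::banach) \<Rightarrow> (nat \<Rightarrow> 'b::banach) \<Rightarrow> (nat \<Rightarrow> nat) \<Rightarrow> (nat \<Rightarrow> nat)
    \<Rightarrow> (nat \<Rightarrow> real) \<Rightarrow> real" where
  "W_norm x y m n c = max (norm (\<Sum>i\<in>{i. c (m i) \<noteq> 0}. c (m i) *\<^sub>R x i))
                          (norm (\<Sum>i\<in>{i. c (n i) \<noteq> 0}. c (n i) *\<^sub>R y i))"

text \<open>Norm in W^* of \<Sum>i<K. a i e_i^*, computed on the dense subspace c_00 of W.\<close>
definition W_dual_comb_norm :: "(nat \<Rightarrow> 'a::banach) \<Rightarrow> (nat \<Rightarrow> 'b::banach) \<Rightarrow> (nat \<Rightarrow> nat)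
    \<Rightarrow> (nat \<Rightarrow> nat) \<Rightarrow> nat \<Rightarrow> (nat \<Rightarrow> real) \<Rightarrow> real" where
  "W_dual_comb_norm x y m n K a =
     Sup {\<bar>\<Sum>i<K. a i * c i\<bar> | c. c00 c \<and> W_norm x y m n c \<le> 1}"

end

theory Submission
  imports Defs
begin

text \<open>
  Via c \<mapsto> (\<Sum>i. c (m i) x i, \<Sum>i. c (n i) y i), W is isometric to a subspace of X \<times> Y
  with the max-norm. Hahn-Banach therefore splits a functional \<Sum>i<K. a i e_i^* on W into an
  X-functional and a Y-functional of no larger norm; on coordinates, a = \<alpha> + \<beta> with \<alpha>
  supported on M and \<beta> on N. Splitting b = \<alpha>' + \<beta>' likewise, a b = \<alpha> b + \<alpha>' \<beta> + \<beta> \<beta>'.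
  The sequences b and \<beta> are bounded by the norms of the functionals, and unconditionality
  of (x_i) bounds the corresponding multipliers, so the first two terms are X-functionals of
  norm O(norm a * norm b). The last term is a product of Y-functionals, controlled by
  submultiplicativity of (y_i^*). The basis constants needed come from Zabreiko's lemma (a
  countably subadditive seminorm on a Banach space is continuous), applied to the supremum
  of the norms of the basis projections.
\<close>

section \<open>Coordinates of a Schauder basis\<close>

lemma coord_sums:
  assumes "schauder_basis z"
  shows "(\<lambda>i. coord z i v *\<^sub>R z i) sums v"
proof -
  from assms have "\<exists>!c. (\<lambda>i. c i *\<^sub>R z i) sums v" by (simp add: schauder_basis_def)
  then show ?thesis unfolding coord_def by (rule theI')
qed

lemma coord_unique:
  assumes "schauder_basis z" "(\<lambda>i. c i *\<^sub>R z i) sums v"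
  shows "coord z i v = c i"
proof -
  from assms(1) have "\<exists>!c. (\<lambda>i. c i *\<^sub>R z i) sums v" by (simp add: schauder_basis_def)
  from this assms(2) have "(THE c. (\<lambda>i. c i *\<^sub>R z i) sums v) = c"
    by (rule the1_equality[where P = "\<lambda>c. (\<lambda>i. c i *\<^sub>R z i) sums v"])
  then show ?thesis by (simp add: coord_def)
qed

lemma coord_add:
  assumes "schauder_basis z"
  shows "coord z i (u + v) = coord z i u + coord z i v"
proof -
  have "(\<lambda>i. (coord z i u + coord z i v) *\<^sub>R z i) sums (u + v)"
    using sums_add[OF coord_sums[OF assms, of u] coord_sums[OF assms, of v]]
    by (simp add: scaleR_add_left)
  then show ?thesis by (simp add: coord_unique[OF assms])
qed

lemma coord_scaleR:
  assumes "schauder_basis z"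
  shows "coord z i (t *\<^sub>R v) = t * coord z i v"
proof -
  have "(\<lambda>i. (t * coord z i v) *\<^sub>R z i) sums (t *\<^sub>R v)"
    using sums_scaleR_right[OF coord_sums[OF assms, of v], of t] by simp
  then show ?thesis by (simp add: coord_unique[OF assms])
qed

lemma coord_finite_sum:
  assumes "schauder_basis z" "finite F"
  shows "coord z i (\<Sum>j\<in>F. d j *\<^sub>R z j) = (if i \<in> F then d i else 0)"
proof -
  let ?c = "\<lambda>j. if j \<in> F then d j else 0"
  have "(\<lambda>j. ?c j *\<^sub>R z j) sums (\<Sum>j\<in>F. ?c j *\<^sub>R z j)"
    by (rule sums_finite) (use assms in auto)
  also have "(\<Sum>j\<in>F. ?c j *\<^sub>R z j) = (\<Sum>j\<in>F. d j *\<^sub>R z j)"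
    by (rule sum.cong) auto
  finally show ?thesis using coord_unique[OF assms(1)] by simp
qed

lemma coord_basis_vector:
  assumes "schauder_basis z"
  shows "coord z j (z i) = (if j = i then 1 else 0)"
  using coord_finite_sum[OF assms, of "{i}" j "\<lambda>_. 1"] by simp

definition basis_proj :: "(nat \<Rightarrow> 'a::banach) \<Rightarrow> nat set \<Rightarrow> 'a \<Rightarrow> 'a" where
  "basis_proj z G v = (\<Sum>i\<in>G. coord z i v *\<^sub>R z i)"

lemma basis_proj_add: "schauder_basis z \<Longrightarrow> basis_proj z G (u + v) = basis_proj z G u + basis_proj z G v"
  unfolding basis_proj_def by (simp add: coord_add scaleR_add_left sum.distrib)

lemma basis_proj_scaleR: "schauder_basis z \<Longrightarrow> basis_proj z G (t *\<^sub>R v) = t *\<^sub>R basis_proj z G v"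
  unfolding basis_proj_def by (simp add: coord_scaleR scaleR_sum_right)

lemma basis_proj_lessThan_tendsto: "schauder_basis z \<Longrightarrow> (\<lambda>N. basis_proj z {..<N} v) \<longlonglongrightarrow> v"
  using coord_sums[of z v] unfolding basis_proj_def sums_def by simp

lemma abs_coord_le_basis_proj:
  assumes "norm (z i) = 1"
  shows "\<bar>coord z i v\<bar> \<le> norm (basis_proj z {..<Suc i} v) + norm (basis_proj z {..<i} v)"
proof -
  have "\<bar>coord z i v\<bar> = norm (basis_proj z {..<Suc i} v - basis_proj z {..<i} v)"
    using assms by (simp add: basis_proj_def)
  also have "\<dots> \<le> norm (basis_proj z {..<Suc i} v) + norm (basis_proj z {..<i} v)"
    by (rule norm_triangle_ineq4)
  finally show ?thesis .
qed

lemma abs_coord_le: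
  assumes "norm (z i) = 1" "\<And>N. norm (basis_proj z {..<N} v) \<le> C * norm v"
  shows "\<bar>coord z i v\<bar> \<le> 2 * C * norm v"
  using abs_coord_le_basis_proj[of z i v, OF assms(1)] assms(2)[of i] assms(2)[of "Suc i"] by simp

section \<open>Zabreiko's lemma\<close>

lemma Baire_ball_in_closure:
  fixes F :: "nat \<Rightarrow> 'a::banach set"
  assumes "(\<Union>k. F k) = UNIV"
  shows "\<exists>k v r. 0 < r \<and> ball v r \<subseteq> closure (F k)"
proof (rule ccontr)
  assume no_ball: "\<not> ?thesis"
  have "euclidean interior_of (\<Union>k. closure (F k)) = {}"
  proof (rule Baire_category_alt)
    show "completely_metrizable_space (euclidean :: 'a topology) \<or>
        locally_compact_space (euclidean :: 'a topology) \<and> regular_space (euclidean :: 'a topology)"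
      using completely_metrizable_space_euclidean by blast
    fix T assume "T \<in> range (\<lambda>k. closure (F k))"
    then obtain k where T: "T = closure (F k)" by auto
    have "interior T = {}"
      using no_ball T by (metis all_not_in_conv mem_interior)
    then show "closedin euclidean T \<and> euclidean interior_of T = {}"
      using T by simp
  qed simp
  moreover have "(\<Union>k. closure (F k)) = UNIV"
    using assms closure_subset by blast
  ultimately show False by simp
qed

locale seminorm =
  fixes p :: "'a::real_normed_vector \<Rightarrow> real"
  assumes nonneg: "0 \<le> p v"
    and triangle: "p (u + v) \<le> p u + p v"
    and scaleR: "p (t *\<^sub>R v) \<le> \<bar>t\<bar> * p v"
begin

lemma zero: "p 0 = 0"
  using scaleR[of 0 0] nonneg[of 0] by simp

lemma approx_small_of_ball_in_closure:
  assumes "ball v0 r \<subseteq> closure {v. p v \<le> k}" and "norm u < r" and "0 < \<epsilon>"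
  shows "\<exists>w. p w \<le> k \<and> norm (u - w) < \<epsilon>"
proof -
  have "v0 + u \<in> closure {v. p v \<le> k}" "v0 - u \<in> closure {v. p v \<le> k}"
    using assms(1,2) by (auto simp: dist_norm)
  then obtain w1 w2 where w1: "p w1 \<le> k" "dist w1 (v0 + u) < \<epsilon>"
    and w2: "p w2 \<le> k" "dist w2 (v0 - u) < \<epsilon>"
    using \<open>0 < \<epsilon>\<close> unfolding closure_approachable by blast
  \<comment> \<open>the midpoint trick moves the ball from v0 to the origin\<close>
  define w where "w = (1/2) *\<^sub>R (w1 - w2)"
  have "p w \<le> (1/2) * (p w1 + p ((-1) *\<^sub>R w2))"
    unfolding w_def using scaleR[of "1/2" "w1 - w2"] triangle[of w1 "(-1) *\<^sub>R w2"] by simp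
  also have "\<dots> \<le> (1/2) * (p w1 + p w2)"
    using scaleR[of "-1" w2] by simp
  also have "\<dots> \<le> k" using w1 w2 by simp
  finally have "p w \<le> k" .
  moreover have "norm (u - w) < \<epsilon>"
  proof -
    have "u - w = (1/2) *\<^sub>R ((v0 + u - w1) - (v0 - u - w2))"
      unfolding w_def by (simp add: algebra_simps scaleR_add_left[symmetric])
    then have "norm (u - w) \<le> (1/2) * (norm (v0 + u - w1) + norm (v0 - u - w2))"
      using norm_triangle_ineq4[of "v0 + u - w1" "v0 - u - w2"] by simp
    also have "\<dots> < \<epsilon>"
      using w1(2) w2(2) by (simp add: dist_norm norm_minus_commute)
    finally show ?thesis .
  qed
  ultimately show ?thesis by blast
qed

lemma approx_of_ball_in_closure:
  assumes r: "0 < r" and ball: "ball v0 r \<subseteq> closure {v. p v \<le> k}" and \<epsilon>: "0 < \<epsilon>"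
  shows "\<exists>w. p w \<le> 2 * k / r * norm u \<and> norm (u - w) < \<epsilon>"
proof (cases "u = 0")
  case True
  then show ?thesis using \<epsilon> zero by (auto intro!: exI[of _ 0])
next
  case False
  define t where "t = r / (2 * norm u)"
  have t: "0 < t" using False r by (simp add: t_def)
  have "norm (t *\<^sub>R u) < r" using False r t by (simp add: t_def)
  then obtain w where w: "p w \<le> k" "norm (t *\<^sub>R u - w) < \<epsilon> * t"
    using approx_small_of_ball_in_closure[OF ball] \<epsilon> t by (meson mult_pos_pos)
  have "p ((1/t) *\<^sub>R w) \<le> (1/t) * p w"
    using scaleR[of "1/t" w] t by simp
  also have "\<dots> \<le> (1/t) * k"
    using w t by (simp add: divide_right_mono)
  also have "(1/t) * k = 2 * k / r * norm u"
    unfolding t_def using False r by (simp add: field_simps)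
  finally have "p ((1/t) *\<^sub>R w) \<le> 2 * k / r * norm u" .
  moreover have "u - (1/t) *\<^sub>R w = (1/t) *\<^sub>R (t *\<^sub>R u - w)"
    using t by (simp add: algebra_simps)
  then have "norm (u - (1/t) *\<^sub>R w) < \<epsilon>"
    using w t by (simp add: pos_divide_less_eq)
  ultimately show ?thesis by blast
qed

lemma approx_series:
  assumes D: "0 \<le> D" and approx: "\<And>u \<epsilon>. 0 < \<epsilon> \<Longrightarrow> \<exists>w. p w \<le> D * norm u \<and> norm (u - w) < \<epsilon>"
  obtains w where "w sums v" and "\<And>j. p (w j) \<le> (D * norm v) * (1/2) ^ j"
proof (cases "v = 0")
  case True
  then show ?thesis using that[of "\<lambda>_. 0"] zero by simp
next
  case False
  define e where "e = norm v"
  have e: "0 < e" using False by (simp add: e_def)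
  define W where "W u \<epsilon> = (SOME w. p w \<le> D * norm u \<and> norm (u - w) < \<epsilon>)" for u \<epsilon>
  have W: "p (W u \<epsilon>) \<le> D * norm u \<and> norm (u - W u \<epsilon>) < \<epsilon>" if "0 < \<epsilon>" for u \<epsilon>
    unfolding W_def by (rule someI_ex) (rule approx[OF that])
  \<comment> \<open>approximate the remainder at each step to within half of the previous error\<close>
  define U where "U = rec_nat v (\<lambda>j u. u - W u (e * (1/2) ^ Suc j))"
  define w where "w j = W (U j) (e * (1/2) ^ Suc j)" for j
  have U_Suc: "U (Suc j) = U j - w j" for j by (simp add: U_def w_def)
  have norm_U: "norm (U j) \<le> e * (1/2) ^ j" for j
  proof (induction j)
    case 0
    then show ?case by (simp add: U_def e_def)
  next
    case (Suc j)
    show ?case unfolding U_Suc w_def using W[of "e * (1/2) ^ Suc j" "U j"] e by simp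
  qed
  have "(\<lambda>j. e * (1/2::real) ^ j) \<longlonglongrightarrow> 0"
    by (intro tendsto_mult_right_zero LIMSEQ_power_zero) simp
  then have "U \<longlonglongrightarrow> 0"
    by (rule Lim_null_comparison[rotated]) (simp add: norm_U)
  moreover have "(\<Sum>j<J. w j) = v - U J" for J
    by (induction J) (simp_all add: U_Suc, simp add: U_def)
  ultimately have "w sums v"
    unfolding sums_def using tendsto_diff[OF tendsto_const[of v], of U 0] by simp
  moreover have "p (w j) \<le> (D * e) * (1/2) ^ j" for j
  proof -
    have "p (w j) \<le> D * norm (U j)" unfolding w_def using W[of "e * (1/2) ^ Suc j" "U j"] e by simp
    also have "\<dots> \<le> D * (e * (1/2) ^ j)" using norm_U D by (simp add: mult_left_mono)
    finally show ?thesis by simp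
  qed
  ultimately show ?thesis using that unfolding e_def by blast
qed

end

locale countably_subadditive_seminorm = seminorm p for p :: "'a::banach \<Rightarrow> real" +
  assumes countably_subadditive: "w sums v \<Longrightarrow> summable (\<lambda>j. p (w j)) \<Longrightarrow> p v \<le> (\<Sum>j. p (w j))"
begin

lemma le_of_approx:
  assumes "0 \<le> D" and "\<And>u \<epsilon>. 0 < \<epsilon> \<Longrightarrow> \<exists>w. p w \<le> D * norm u \<and> norm (u - w) < \<epsilon>"
  shows "p v \<le> 2 * D * norm v"
proof -
  obtain w where w: "w sums v" and p_w: "\<And>j. p (w j) \<le> (D * norm v) * (1/2) ^ j"
    using approx_series[OF assms] by blast
  have geom: "(\<lambda>j. (D * norm v) * (1/2::real) ^ j) sums (2 * D * norm v)"
    using sums_mult[OF geometric_sums[of "1/2::real"], of "D * norm v"] by (simp add: mult_ac)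
  have summable: "summable (\<lambda>j. p (w j))"
    by (rule summable_comparison_test'[OF sums_summable[OF geom], of 0]) (simp add: p_w nonneg)
  have "p v \<le> (\<Sum>j. p (w j))" by (rule countably_subadditive[OF w summable])
  also have "\<dots> \<le> (\<Sum>j. (D * norm v) * (1/2::real) ^ j)"
    by (rule suminf_le[OF p_w summable sums_summable[OF geom]])
  also have "\<dots> = 2 * D * norm v" using geom by (simp add: sums_iff)
  finally show ?thesis .
qed

theorem Zabreiko: "\<exists>C>0. \<forall>v. p v \<le> C * norm v"
proof -
  have "(\<Union>k. {v. p v \<le> real k}) = UNIV"
    by (auto intro: real_arch_simple)
  then obtain k v0 r where r: "0 < r" and ball: "ball v0 r \<subseteq> closure {v. p v \<le> real k}"
    using Baire_ball_in_closure by blast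
  let ?D = "2 * real k / r"
  have le: "p v \<le> 2 * ?D * norm v" for v
    by (rule le_of_approx) (use r approx_of_ball_in_closure[OF r ball] in auto)
  have "p v \<le> (2 * ?D + 1) * norm v" for v
    using le[of v] by (simp add: distrib_right add_increasing2)
  moreover have "0 < 2 * ?D + 1" by (intro add_nonneg_pos) (use r in auto)
  ultimately show ?thesis by blast
qed

end

section \<open>Bounded basis projections\<close>

definition proj_sup :: "(nat \<Rightarrow> 'a::banach) \<Rightarrow> nat set set \<Rightarrow> 'a \<Rightarrow> real" where
  "proj_sup z \<G> v = (SUP G\<in>\<G>. norm (basis_proj z G v))"

locale basis_proj_family =
  fixes z :: "nat \<Rightarrow> 'a::banach" and \<G> :: "nat set set"
  assumes schauder: "schauder_basis z" and normalized: "norm (z i) = 1"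
    and initial_segments: "{..<N} \<in> \<G>"
    and pointwise_bounded: "bdd_above ((\<lambda>G. norm (basis_proj z G v)) ` \<G>)"
begin

lemma norm_basis_proj_le: "G \<in> \<G> \<Longrightarrow> norm (basis_proj z G v) \<le> proj_sup z \<G> v"
  unfolding proj_sup_def by (rule cSUP_upper[OF _ pointwise_bounded])

lemma proj_sup_least: "(\<And>G. G \<in> \<G> \<Longrightarrow> norm (basis_proj z G v) \<le> C) \<Longrightarrow> proj_sup z \<G> v \<le> C"
  unfolding proj_sup_def using initial_segments by (intro cSUP_least) auto

lemma norm_le_proj_sup: "norm v \<le> proj_sup z \<G> v"
proof (rule LIMSEQ_le_const2)
  show "(\<lambda>N. norm (basis_proj z {..<N} v)) \<longlonglongrightarrow> norm v"
    using basis_proj_lessThan_tendsto[OF schauder] by (rule tendsto_norm)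
qed (use norm_basis_proj_le[OF initial_segments] in blast)

lemma abs_coord_le_proj_sup: "\<bar>coord z i v\<bar> \<le> 2 * proj_sup z \<G> v"
  using abs_coord_le_basis_proj[of z i v, OF normalized]
    norm_basis_proj_le[OF initial_segments, of "Suc i" v] norm_basis_proj_le[OF initial_segments, of i v]
  by simp

sublocale seminorm "proj_sup z \<G>"
proof
  fix u v :: 'a and t :: real
  show "0 \<le> proj_sup z \<G> v"
    using norm_basis_proj_le[OF initial_segments] by (rule order_trans[OF norm_ge_zero])
  show "proj_sup z \<G> (u + v) \<le> proj_sup z \<G> u + proj_sup z \<G> v"
  proof (rule proj_sup_least)
    fix G assume "G \<in> \<G>"
    then show "norm (basis_proj z G (u + v)) \<le> proj_sup z \<G> u + proj_sup z \<G> v"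
      unfolding basis_proj_add[OF schauder]
      by (meson add_mono norm_basis_proj_le norm_triangle_le)
  qed
  show "proj_sup z \<G> (t *\<^sub>R v) \<le> \<bar>t\<bar> * proj_sup z \<G> v"
  proof (rule proj_sup_least)
    fix G assume "G \<in> \<G>"
    then show "norm (basis_proj z G (t *\<^sub>R v)) \<le> \<bar>t\<bar> * proj_sup z \<G> v"
      unfolding basis_proj_scaleR[OF schauder] by (simp add: mult_left_mono norm_basis_proj_le)
  qed
qed

lemma coord_sums_of_sums:
  assumes w: "w sums v" and summable: "summable (\<lambda>j. proj_sup z \<G> (w j))"
  shows "(\<lambda>j. coord z i (w j)) sums coord z i v"
proof -
  have summable2: "summable (\<lambda>j. 2 * proj_sup z \<G> (w j))"
    using summable by (rule summable_mult)
  define c where "c i = (\<Sum>j. coord z i (w j))" for i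
  have c: "(\<lambda>j. coord z i (w j)) sums c i" for i
    unfolding c_def
    by (rule summable_sums, rule summable_comparison_test'[OF summable2, of 0])
      (simp add: abs_coord_le_proj_sup)
  have proj_sums: "(\<lambda>j. basis_proj z {..<N} (w j) - w j) sums ((\<Sum>i<N. c i *\<^sub>R z i) - v)" for N
    unfolding basis_proj_def by (intro sums_diff sums_sum sums_scaleR_left c w)
  have bound: "norm (basis_proj z {..<N} (w j) - w j) \<le> 2 * proj_sup z \<G> (w j)" for N j
    using norm_triangle_ineq4[of "basis_proj z {..<N} (w j)" "w j"]
      norm_basis_proj_le[OF initial_segments, of N "w j"] norm_le_proj_sup[of "w j"]
    by simp
  have "(\<lambda>N. \<Sum>j. norm (basis_proj z {..<N} (w j) - w j)) \<longlonglongrightarrow> (\<Sum>j. 0::real)"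
  proof (rule tannerys_theorem[where M = "\<lambda>j. 2 * proj_sup z \<G> (w j)", THEN conjunct2, THEN conjunct2])
    fix j
    show "(\<lambda>N. norm (basis_proj z {..<N} (w j) - w j)) \<longlonglongrightarrow> 0"
      using basis_proj_lessThan_tendsto[OF schauder, of "w j"]
      by (simp add: LIM_zero tendsto_norm_zero)
  qed (use summable2 bound in \<open>auto intro: always_eventually\<close>)
  then have "(\<lambda>N. \<Sum>j. norm (basis_proj z {..<N} (w j) - w j)) \<longlonglongrightarrow> 0"
    by simp
  then have "(\<lambda>N. (\<Sum>i<N. c i *\<^sub>R z i) - v) \<longlonglongrightarrow> 0"
  proof (rule Lim_null_comparison[rotated], intro always_eventually allI)
    fix N
    have "(\<Sum>i<N. c i *\<^sub>R z i) - v = (\<Sum>j. basis_proj z {..<N} (w j) - w j)"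
      using proj_sums[of N] by (simp add: sums_iff)
    also have "norm \<dots> \<le> (\<Sum>j. norm (basis_proj z {..<N} (w j) - w j))"
      by (rule summable_norm) (rule summable_comparison_test'[OF summable2, of 0], simp add: bound)
    finally show "norm ((\<Sum>i<N. c i *\<^sub>R z i) - v) \<le> (\<Sum>j. norm (basis_proj z {..<N} (w j) - w j))" .
  qed
  then have "(\<lambda>i. c i *\<^sub>R z i) sums v"
    by (simp add: sums_def LIM_zero_iff)
  then show ?thesis
    using c by (simp add: coord_unique[OF schauder])
qed

lemma proj_sup_countably_subadditive:
  assumes w: "w sums v" and summable: "summable (\<lambda>j. proj_sup z \<G> (w j))"
  shows "proj_sup z \<G> v \<le> (\<Sum>j. proj_sup z \<G> (w j))"
proof (rule proj_sup_least)
  fix G assume G: "G \<in> \<G>"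
  have "(\<lambda>j. basis_proj z G (w j)) sums basis_proj z G v"
    unfolding basis_proj_def by (intro sums_sum sums_scaleR_left coord_sums_of_sums w summable)
  then have "basis_proj z G v = (\<Sum>j. basis_proj z G (w j))"
    by (simp add: sums_iff)
  also have "norm \<dots> \<le> (\<Sum>j. proj_sup z \<G> (w j))"
    by (rule norm_suminf_le[OF norm_basis_proj_le[OF G] summable])
  finally show "norm (basis_proj z G v) \<le> (\<Sum>j. proj_sup z \<G> (w j))" .
qed

sublocale countably_subadditive_seminorm "proj_sup z \<G>"
  by unfold_locales (rule proj_sup_countably_subadditive)

lemma uniformly_bounded: "\<exists>C>0. \<forall>G\<in>\<G>. \<forall>v. norm (basis_proj z G v) \<le> C * norm v"
  using Zabreiko norm_basis_proj_le by (meson order_trans)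

end

lemma schauder_basis_partial_sums_bounded:
  assumes "normalized_schauder_basis z"
  shows "\<exists>C>0. \<forall>N v. norm (basis_proj z {..<N} v) \<le> C * norm v"
proof -
  have schauder: "schauder_basis z" and normalized: "norm (z i) = 1" for i
    using assms by (auto simp: normalized_schauder_basis_def)
  have "bdd_above ((\<lambda>G. norm (basis_proj z G v)) ` range lessThan)" for v
  proof -
    have "Bseq (\<lambda>N. basis_proj z {..<N} v)"
      using basis_proj_lessThan_tendsto[OF schauder] by (rule convergent_imp_Bseq[OF convergentI])
    then show ?thesis
      unfolding Bseq_def bdd_above_def by (auto intro: less_imp_le)
  qed
  with schauder normalized interpret basis_proj_family z "range lessThan"
    by unfold_locales auto
  from uniformly_bounded show ?thesis by blast
qed

lemma unconditional_basis_proj_bdd: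
  assumes schauder: "schauder_basis z" and unconditional: "unconditional_basis z"
  shows "bdd_above ((\<lambda>G. norm (basis_proj z G v)) ` {G. finite G})"
proof -
  let ?f = "\<lambda>i. coord z i v *\<^sub>R z i"
  have "(?f has_sum v) UNIV"
    using unconditional coord_sums[OF schauder] by (simp add: unconditional_basis_def)
  then have "\<forall>\<^sub>F F in finite_subsets_at_top UNIV. dist (sum ?f F) v < 1"
    unfolding has_sum_def tendsto_iff by simp
  then have "\<exists>X. finite X \<and> X \<subseteq> UNIV \<and>
      (\<forall>Y. finite Y \<and> X \<subseteq> Y \<and> Y \<subseteq> UNIV \<longrightarrow> dist (sum ?f Y) v < 1)"
    by (simp only: eventually_finite_subsets_at_top)
  then obtain X where X: "finite X" and close: "\<And>Y. finite Y \<Longrightarrow> X \<subseteq> Y \<Longrightarrow> dist (sum ?f Y) v < 1"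
    by auto
  have "norm (basis_proj z G v) \<le> norm v + 1 + (\<Sum>i\<in>X. norm (?f i))" if G: "finite G" for G
  proof -
    have "basis_proj z G v = sum ?f (G \<union> X) - sum ?f (X - G)"
      using sum.union_disjoint[of G "X - G" ?f] G X by (simp add: basis_proj_def Un_Diff_cancel)
    also have "norm \<dots> \<le> norm (sum ?f (G \<union> X)) + norm (sum ?f (X - G))"
      by (rule norm_triangle_ineq4)
    also have "norm (sum ?f (G \<union> X)) \<le> norm v + 1"
      using close[of "G \<union> X"] G X norm_triangle_ineq2[of "sum ?f (G \<union> X)" v] by (simp add: dist_norm)
    also have "norm (sum ?f (X - G)) \<le> (\<Sum>i\<in>X. norm (?f i))"
      using norm_sum[of ?f "X - G"] sum_mono2[OF X, of "X - G" "\<lambda>i. norm (?f i)"] by force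
    finally show ?thesis by simp
  qed
  then show ?thesis by (auto simp: bdd_above_def)
qed

lemma unconditional_basis_proj_bounded:
  assumes "normalized_schauder_basis z" "unconditional_basis z"
  shows "\<exists>C>0. \<forall>G v. finite G \<longrightarrow> norm (basis_proj z G v) \<le> C * norm v"
proof -
  have "schauder_basis z" "norm (z i) = 1" for i
    using assms(1) by (auto simp: normalized_schauder_basis_def)
  with unconditional_basis_proj_bdd[OF _ assms(2)] interpret basis_proj_family z "{G. finite G}"
    by unfold_locales auto
  from uniformly_bounded show ?thesis by blast
qed

section \<open>Bounded multipliers\<close>

lemma norm_sum_nonneg_multiplier_le:
  fixes v :: "'i \<Rightarrow> 'a::real_normed_vector"
  assumes "finite G" and "\<And>H. H \<subseteq> G \<Longrightarrow> norm (sum v H) \<le> S"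
    and "\<And>j. j \<in> G \<Longrightarrow> 0 \<le> \<beta> j \<and> \<beta> j \<le> B" and "0 \<le> B"
  shows "norm (\<Sum>j\<in>G. \<beta> j *\<^sub>R v j) \<le> B * S"
  using assms
proof (induction G arbitrary: \<beta> B rule: finite_remove_induct)
  case empty
  then show ?case using empty.prems(1)[of "{}"] by simp
next
  case (remove G)
  define b where "b = Min (\<beta> ` G)"
  have "b \<in> \<beta> ` G"
    unfolding b_def using remove.hyps by (intro Min_in) auto
  then obtain i where i: "i \<in> G" "\<beta> i = b" by auto
  have b_le: "b \<le> \<beta> j" if "j \<in> G" for j
    unfolding b_def using remove.hyps that by simp
  have b: "0 \<le> b" "b \<le> B" using remove.prems(2) i by auto
  \<comment> \<open>peel off the smallest multiplier, which vanishes at i afterwards\<close>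
  have "(\<Sum>j\<in>G. \<beta> j *\<^sub>R v j) = b *\<^sub>R sum v G + (\<Sum>j\<in>G. (\<beta> j - b) *\<^sub>R v j)"
    by (simp add: scaleR_sum_right sum.distrib[symmetric] scaleR_diff_left)
  also have "(\<Sum>j\<in>G. (\<beta> j - b) *\<^sub>R v j) = (\<Sum>j\<in>G - {i}. (\<beta> j - b) *\<^sub>R v j)"
    using sum.remove[OF remove.hyps(1) i(1), of "\<lambda>j. (\<beta> j - b) *\<^sub>R v j"] i by simp
  finally have "norm (\<Sum>j\<in>G. \<beta> j *\<^sub>R v j)
      \<le> b * norm (sum v G) + norm (\<Sum>j\<in>G - {i}. (\<beta> j - b) *\<^sub>R v j)"
    using norm_triangle_ineq b by (metis abs_of_nonneg norm_scaleR)
  also have "\<dots> \<le> b * S + (B - b) * S"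
  proof (rule add_mono)
    show "b * norm (sum v G) \<le> b * S" using remove.prems(1) b by (simp add: mult_left_mono)
    show "norm (\<Sum>j\<in>G - {i}. (\<beta> j - b) *\<^sub>R v j) \<le> (B - b) * S"
    proof (rule remove.IH[OF i(1), of "\<lambda>j. \<beta> j - b" "B - b"])
      show "norm (sum v H) \<le> S" if "H \<subseteq> G - {i}" for H
        using remove.prems(1) that by blast
      show "0 \<le> \<beta> j - b \<and> \<beta> j - b \<le> B - b" if "j \<in> G - {i}" for j
        using remove.prems(2) b_le that by force
    qed (use b in simp)
  qed
  finally show ?case by (simp add: algebra_simps)
qed

lemma norm_sum_multiplier_le:
  fixes v :: "'i \<Rightarrow> 'a::real_normed_vector"
  assumes "finite G" and "\<And>H. H \<subseteq> G \<Longrightarrow> norm (sum v H) \<le> S"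
    and "\<And>j. j \<in> G \<Longrightarrow> \<bar>\<beta> j\<bar> \<le> B" and "0 \<le> B"
  shows "norm (\<Sum>j\<in>G. \<beta> j *\<^sub>R v j) \<le> 2 * B * S"
proof -
  have "(\<Sum>j\<in>G. \<beta> j *\<^sub>R v j) = (\<Sum>j\<in>G. max (\<beta> j) 0 *\<^sub>R v j) - (\<Sum>j\<in>G. max (- \<beta> j) 0 *\<^sub>R v j)"
    unfolding sum_subtractf[symmetric] by (rule sum.cong) (auto simp: max_def simp flip: scaleR_diff_left)
  also have "norm \<dots> \<le> norm (\<Sum>j\<in>G. max (\<beta> j) 0 *\<^sub>R v j) + norm (\<Sum>j\<in>G. max (- \<beta> j) 0 *\<^sub>R v j)"
    by (rule norm_triangle_ineq4)
  also have "\<dots> \<le> B * S + B * S"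
    using assms by (intro add_mono norm_sum_nonneg_multiplier_le) (auto simp: abs_le_iff)
  finally show ?thesis by simp
qed

lemma abs_sum_functional_multiplier_le:
  fixes x :: "nat \<Rightarrow> 'a::real_normed_vector"
  assumes functional: "\<And>s. \<bar>\<Sum>j<J. s j * \<phi> j\<bar> \<le> A * norm (\<Sum>j<J. s j *\<^sub>R x j)" and "0 \<le> A"
    and "\<And>H. H \<subseteq> {..<J} \<Longrightarrow> norm (\<Sum>j\<in>H. u j *\<^sub>R x j) \<le> S"
    and "\<And>j. j < J \<Longrightarrow> \<bar>\<beta> j\<bar> \<le> B" and "0 \<le> B"
  shows "\<bar>\<Sum>j<J. \<phi> j * (\<beta> j * u j)\<bar> \<le> 2 * A * B * S"
proof -
  have "\<bar>\<Sum>j<J. \<phi> j * (\<beta> j * u j)\<bar> \<le> A * norm (\<Sum>j<J. \<beta> j *\<^sub>R (u j *\<^sub>R x j))"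
    using functional[of "\<lambda>j. \<beta> j * u j"] by (simp add: mult_ac)
  also have "\<dots> \<le> A * (2 * B * S)"
    using assms by (intro mult_left_mono norm_sum_multiplier_le) auto
  finally show ?thesis by (simp add: mult_ac)
qed

lemma abs_functional_coeff_le:
  fixes x :: "nat \<Rightarrow> 'a::real_normed_vector"
  assumes functional: "\<And>s. \<bar>\<Sum>j<J. s j * \<phi> j\<bar> \<le> A * norm (\<Sum>j<J. s j *\<^sub>R x j)"
    and "norm (x j) = 1" and "j < J"
  shows "\<bar>\<phi> j\<bar> \<le> A"
proof -
  have "(\<Sum>k<J. (if k = j then 1 else 0) * \<phi> k) = \<phi> j"
    "(\<Sum>k<J. (if k = j then 1 else 0) *\<^sub>R x k) = x j"
    using assms(3) by (simp_all add: if_distrib[of "\<lambda>c. c * _"] if_distrib[of "\<lambda>c. c *\<^sub>R _"] cong: if_cong)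
  then show ?thesis using functional[of "\<lambda>k. if k = j then 1 else 0"] assms(2) by simp
qed

section \<open>Hahn-Banach in finite dimensions\<close>

definition linear_on :: "'a::real_vector set \<Rightarrow> ('a \<Rightarrow> real) \<Rightarrow> bool" where
  "linear_on L f \<longleftrightarrow> (\<forall>u\<in>L. \<forall>v\<in>L. f (u + v) = f u + f v) \<and> (\<forall>t. \<forall>v\<in>L. f (t *\<^sub>R v) = t * f v)"

definition sublinear :: "('a::real_vector \<Rightarrow> real) \<Rightarrow> bool" where
  "sublinear p \<longleftrightarrow> (\<forall>u v. p (u + v) \<le> p u + p v) \<and> (\<forall>t v. 0 \<le> t \<longrightarrow> p (t *\<^sub>R v) = t * p v)"

lemma linear_on_sum:
  assumes "subspace E" "linear_on E F" "\<And>i. i \<in> I \<Longrightarrow> u i \<in> E"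
  shows "F (\<Sum>i\<in>I. t i *\<^sub>R u i) = (\<Sum>i\<in>I. t i * F (u i))"
  using assms(3)
proof (induction I rule: infinite_finite_induct)
  case (infinite I)
  then show ?case using assms(1,2) subspace_0 unfolding linear_on_def by (metis scaleR_zero_left mult_zero_left sum.infinite)
next
  case empty
  then show ?case using assms(1,2) subspace_0 unfolding linear_on_def by (metis scaleR_zero_left mult_zero_left sum.empty)
next
  case (insert i I)
  then show ?case
    using assms(1,2) unfolding linear_on_def by (simp add: subspace_mul subspace_sum)
qed

lemma span_insert_subspace:
  assumes "subspace L"
  shows "span (insert w L) = {g. \<exists>k. g - k *\<^sub>R w \<in> L}"
  unfolding span_insert span_eq_iff[THEN iffD2, OF assms] ..

lemma span_insert_coeff_unique:
  assumes L: "subspace L" and "w \<notin> L" and "g - k *\<^sub>R w \<in> L" "g - k' *\<^sub>R w \<in> L"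
  shows "k = k'"
proof (rule ccontr)
  assume "k \<noteq> k'"
  have "(1 / (k - k')) *\<^sub>R ((g - k' *\<^sub>R w) - (g - k *\<^sub>R w)) \<in> L"
    by (rule subspace_mul[OF L subspace_diff[OF L assms(4,3)]])
  also have "(g - k' *\<^sub>R w) - (g - k *\<^sub>R w) = (k - k') *\<^sub>R w"
    by (simp add: scaleR_diff_left)
  also have "(1 / (k - k')) *\<^sub>R ((k - k') *\<^sub>R w) = w"
    using \<open>k \<noteq> k'\<close> by simp
  finally show False using \<open>w \<notin> L\<close> by simp
qed

lemma linear_on_extend_insert:
  assumes L: "subspace L" and f: "linear_on L f" and "w \<notin> L"
  obtains F where "linear_on (span (insert w L)) F" and "\<And>l t. l \<in> L \<Longrightarrow> F (l + t *\<^sub>R w) = f l + t * c"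
proof
  have f_add: "f (u + v) = f u + f v" if "u \<in> L" "v \<in> L" for u v
    using f that unfolding linear_on_def by auto
  have f_scaleR: "f (t *\<^sub>R u) = t * f u" if "u \<in> L" for u t
    using f that unfolding linear_on_def by auto
  define \<kappa> where "\<kappa> g = (THE k. g - k *\<^sub>R w \<in> L)" for g
  define F where "F g = f (g - \<kappa> g *\<^sub>R w) + \<kappa> g * c" for g
  show F_eq: "F (l + t *\<^sub>R w) = f l + t * c" if "l \<in> L" for l t
  proof -
    have "\<kappa> (l + t *\<^sub>R w) = t"
      unfolding \<kappa>_def using that span_insert_coeff_unique[OF L \<open>w \<notin> L\<close>] by (intro the_equality) auto
    then show ?thesis by (simp add: F_def)
  qed
  show "linear_on (span (insert w L)) F"
    unfolding linear_on_def span_insert_subspace[OF L]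
  proof safe
    fix u v k k' assume u: "u - k *\<^sub>R w \<in> L" and v: "v - k' *\<^sub>R w \<in> L"
    have "F (u + v) = F ((u - k *\<^sub>R w) + (v - k' *\<^sub>R w) + (k + k') *\<^sub>R w)"
      by (simp add: algebra_simps)
    also have "\<dots> = f (u - k *\<^sub>R w) + f (v - k' *\<^sub>R w) + (k + k') * c"
      using u v L by (simp add: F_eq f_add subspace_add)
    also have "\<dots> = F u + F v"
      using F_eq[OF u, of k] F_eq[OF v, of k'] by (simp add: algebra_simps)
    finally show "F (u + v) = F u + F v" .
  next
    fix t v k assume v: "v - k *\<^sub>R w \<in> L"
    have "F (t *\<^sub>R v) = F (t *\<^sub>R (v - k *\<^sub>R w) + (t * k) *\<^sub>R w)"
      by (simp add: algebra_simps)
    also have "\<dots> = f (t *\<^sub>R (v - k *\<^sub>R w)) + (t * k) * c"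
      using v L by (simp add: F_eq subspace_mul)
    also have "\<dots> = t * F v"
      using F_eq[OF v, of k] f_scaleR[OF v, of t] by (simp add: algebra_simps)
    finally show "F (t *\<^sub>R v) = t * F v" .
  qed
qed

lemma sublinear_bound_insert:
  assumes L: "subspace L" and p: "sublinear p" and f: "linear_on L f" and "f l \<le> p l" and l: "l \<in> L"
    and c_ge: "\<And>l. l \<in> L \<Longrightarrow> f l - p (l - w) \<le> c"
    and c_le: "\<And>l. l \<in> L \<Longrightarrow> c \<le> p (l + w) - f l"
  shows "f l + t * c \<le> p (l + t *\<^sub>R w)"
proof -
  have f_scaleR: "f (s *\<^sub>R l) = s * f l" for s
    using f l unfolding linear_on_def by auto
  have p_scaleR: "0 \<le> s \<Longrightarrow> p (s *\<^sub>R u) = s * p u" for s u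
    using p unfolding sublinear_def by auto
  consider "t = 0" | "0 < t" | "t < 0" by linarith
  then show ?thesis
  proof cases
    case 1
    then show ?thesis using \<open>f l \<le> p l\<close> by simp
  next
    case 2
    have eq: "(1/t) *\<^sub>R l + w = (1/t) *\<^sub>R (l + t *\<^sub>R w)"
      using 2 by (simp add: algebra_simps)
    have "t * c \<le> t * (p ((1/t) *\<^sub>R l + w) - f ((1/t) *\<^sub>R l))"
      using c_le[of "(1/t) *\<^sub>R l"] l L 2 by (simp add: subspace_mul)
    also have "\<dots> = p (l + t *\<^sub>R w) - f l"
      unfolding eq using 2 p_scaleR[of "1/t" "l + t *\<^sub>R w"] f_scaleR[of "1/t"]
      by (simp add: right_diff_distrib)
    finally show ?thesis by simp
  next
    case 3
    have eq: "(1/(-t)) *\<^sub>R l - w = (1/(-t)) *\<^sub>R (l + t *\<^sub>R w)"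
      using 3 by (simp add: algebra_simps)
    have "f l - p (l + t *\<^sub>R w) = (-t) * (f ((1/(-t)) *\<^sub>R l) - p ((1/(-t)) *\<^sub>R l - w))"
      unfolding eq using 3 p_scaleR[of "1/(-t)" "l + t *\<^sub>R w"] f_scaleR[of "1/(-t)"]
      by (simp add: right_diff_distrib)
    also have "\<dots> \<le> (-t) * c"
      using c_ge[of "(1/(-t)) *\<^sub>R l"] l L 3 by (simp add: subspace_mul subspace_neg)
    finally show ?thesis by simp
  qed
qed

lemma Hahn_Banach_insert:
  assumes L: "subspace L" and p: "sublinear p" and f: "linear_on L f" and f_le: "\<And>v. v \<in> L \<Longrightarrow> f v \<le> p v"
  shows "\<exists>F. linear_on (span (insert w L)) F \<and> (\<forall>v\<in>L. F v = f v) \<and> (\<forall>v\<in>span (insert w L). F v \<le> p v)"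
proof (cases "w \<in> L")
  case True
  then have "span (insert w L) = L"
    using L by (simp add: insert_absorb span_eq_iff)
  then show ?thesis using f f_le by auto
next
  case False
  have gap: "f l - p (l - w) \<le> p (l' + w) - f l'" if "l \<in> L" "l' \<in> L" for l l'
  proof -
    have "f l + f l' = f (l + l')" using f that by (simp add: linear_on_def)
    also have "\<dots> \<le> p (l + l')" using that L by (simp add: f_le subspace_add)
    also have "\<dots> = p ((l - w) + (l' + w))" by simp
    also have "\<dots> \<le> p (l - w) + p (l' + w)" using p unfolding sublinear_def by blast
    finally show ?thesis by simp
  qed
  \<comment> \<open>any value between the two sides of the gap can be assigned to w\<close>
  define c where "c = (SUP l\<in>L. f l - p (l - w))"
  have c_ge: "f l - p (l - w) \<le> c" if "l \<in> L" for l
    unfolding c_def using that gap[OF _ subspace_0[OF L]] by (intro cSUP_upper bdd_aboveI2) auto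
  have c_le: "c \<le> p (l + w) - f l" if "l \<in> L" for l
    unfolding c_def using that gap subspace_0[OF L] by (intro cSUP_least) auto
  obtain F where F: "linear_on (span (insert w L)) F" and F_eq: "\<And>l t. l \<in> L \<Longrightarrow> F (l + t *\<^sub>R w) = f l + t * c"
    using linear_on_extend_insert[OF L f False] by blast
  have "F g \<le> p g" if "g \<in> span (insert w L)" for g
  proof -
    from that obtain t where l: "g - t *\<^sub>R w \<in> L" unfolding span_insert_subspace[OF L] by blast
    then show ?thesis
      using F_eq[OF l, of t] sublinear_bound_insert[OF L p f f_le l c_ge c_le, of t] by simp
  qed
  moreover have "F v = f v" if "v \<in> L" for v
    using F_eq[OF that, of 0] by simp
  ultimately show ?thesis using F by blast
qed

lemma Hahn_Banach_finite:
  assumes "finite W" and L: "subspace L" and p: "sublinear p" and f: "linear_on L f"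
    and f_le: "\<And>v. v \<in> L \<Longrightarrow> f v \<le> p v"
  shows "\<exists>F. linear_on (span (W \<union> L)) F \<and> (\<forall>v\<in>L. F v = f v) \<and> (\<forall>v\<in>span (W \<union> L). F v \<le> p v)"
  using assms(1)
proof (induction W rule: finite_induct)
  case empty
  then show ?case unfolding Un_empty_left span_eq_iff[THEN iffD2, OF L] using f f_le by auto
next
  case (insert w W)
  then obtain F where F: "linear_on (span (W \<union> L)) F" "\<forall>v\<in>L. F v = f v" "\<forall>v\<in>span (W \<union> L). F v \<le> p v"
    by blast
  have "span (insert w W \<union> L) = span (insert w (span (W \<union> L)))"
    by (simp add: span_insert span_span)
  moreover have "L \<subseteq> span (W \<union> L)"
    by (meson le_supE span_superset)
  moreover obtain F' where "linear_on (span (insert w (span (W \<union> L)))) F'"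
    "\<forall>v\<in>span (W \<union> L). F' v = F v" "\<forall>v\<in>span (insert w (span (W \<union> L))). F' v \<le> p v"
    using Hahn_Banach_insert[OF subspace_span p F(1), of w] F(3) by blast
  ultimately show ?case
    using F(2) by (intro exI[of _ F']) auto
qed

lemma sublinear_scaled_max_norm:
  assumes "0 \<le> A"
  shows "sublinear (\<lambda>g :: 'a::real_normed_vector \<times> 'b::real_normed_vector. A * max (norm (fst g)) (norm (snd g)))"
  unfolding sublinear_def
proof safe
  fix g h :: "'a \<times> 'b"
  have "max (norm (fst (g + h))) (norm (snd (g + h)))
      \<le> max (norm (fst g)) (norm (snd g)) + max (norm (fst h)) (norm (snd h))"
    using norm_triangle_ineq[of "fst g" "fst h"] norm_triangle_ineq[of "snd g" "snd h"] by auto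
  then show "A * max (norm (fst (g + h))) (norm (snd (g + h)))
      \<le> A * max (norm (fst g)) (norm (snd g)) + A * max (norm (fst h)) (norm (snd h))"
    using assms by (simp add: distrib_left[symmetric] mult_left_mono)
qed (use assms in \<open>simp add: max_mult_distrib_left mult_ac\<close>)

lemma abs_le_of_linear_on_le:
  assumes "subspace E" "linear_on E F" "\<And>g. g \<in> E \<Longrightarrow> F g \<le> p g" "\<And>g. p (- g) = p g" "g \<in> E"
  shows "\<bar>F g\<bar> \<le> p g"
proof -
  have "F ((-1) *\<^sub>R g) = - F g" using assms(2,5) unfolding linear_on_def by (metis mult_minus1)
  then have "- F g \<le> p g" using assms(3)[of "(-1) *\<^sub>R g"] assms(1,4,5) by (simp add: subspace_neg)
  then show ?thesis using assms(3,5) by (simp add: abs_le_iff)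
qed

lemma Hahn_Banach_product_split:
  fixes u :: "nat \<Rightarrow> 'a::real_normed_vector" and v :: "nat \<Rightarrow> 'b::real_normed_vector"
  assumes L: "subspace L" and f: "linear_on L f" and A: "0 \<le> A"
    and f_le: "\<And>g. g \<in> L \<Longrightarrow> f g \<le> A * max (norm (fst g)) (norm (snd g))"
  obtains \<phi> \<psi> where
    "\<And>s t. (\<Sum>j<J. s j *\<^sub>R u j, \<Sum>j<J'. t j *\<^sub>R v j) \<in> L \<Longrightarrow>
      f (\<Sum>j<J. s j *\<^sub>R u j, \<Sum>j<J'. t j *\<^sub>R v j) = (\<Sum>j<J. s j * \<phi> j) + (\<Sum>j<J'. t j * \<psi> j)"
    and "\<And>s. \<bar>\<Sum>j<J. s j * \<phi> j\<bar> \<le> A * norm (\<Sum>j<J. s j *\<^sub>R u j)"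
    and "\<And>t. \<bar>\<Sum>j<J'. t j * \<psi> j\<bar> \<le> A * norm (\<Sum>j<J'. t j *\<^sub>R v j)"
proof -
  define p where "p g = A * max (norm (fst g)) (norm (snd g))" for g :: "'a \<times> 'b"
  have "sublinear p"
    unfolding p_def[abs_def] by (rule sublinear_scaled_max_norm[OF A])
  define U where "U = (\<lambda>j. (u j, 0)) ` {..<J} \<union> (\<lambda>j. (0, v j)) ` {..<J'}"
  obtain F where F_lin: "linear_on (span (U \<union> L)) F" and F_ext: "\<forall>g\<in>L. F g = f g"
    and F_le: "\<forall>g\<in>span (U \<union> L). F g \<le> p g"
    using Hahn_Banach_finite[of U L p f] L \<open>sublinear p\<close> f f_le by (auto simp: U_def p_def)
  have F_abs: "\<bar>F g\<bar> \<le> p g" if "g \<in> span (U \<union> L)" for g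
    by (rule abs_le_of_linear_on_le[OF subspace_span F_lin]) (use F_le that in \<open>auto simp: p_def\<close>)
  define \<phi> where "\<phi> j = F (u j, 0)" for j
  define \<psi> where "\<psi> j = F (0, v j)" for j
  have u_sum: "(\<Sum>j<J. s j *\<^sub>R u j, 0) = (\<Sum>j<J. s j *\<^sub>R (u j, 0::'b))" for s
    by (simp add: prod_eq_iff fst_sum snd_sum)
  have v_sum: "(0, \<Sum>j<J'. t j *\<^sub>R v j) = (\<Sum>j<J'. t j *\<^sub>R (0::'a, v j))" for t
    by (simp add: prod_eq_iff fst_sum snd_sum)
  have u_span: "(\<Sum>j<J. s j *\<^sub>R u j, 0) \<in> span (U \<union> L)" for s
    unfolding u_sum by (intro span_sum span_mul span_base) (auto simp: U_def)
  have v_span: "(0, \<Sum>j<J'. t j *\<^sub>R v j) \<in> span (U \<union> L)" for t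
    unfolding v_sum by (intro span_sum span_mul span_base) (auto simp: U_def)
  have F_u: "F (\<Sum>j<J. s j *\<^sub>R u j, 0) = (\<Sum>j<J. s j * \<phi> j)" for s
    unfolding u_sum \<phi>_def by (rule linear_on_sum[OF subspace_span F_lin]) (auto intro: span_base simp: U_def)
  have F_v: "F (0, \<Sum>j<J'. t j *\<^sub>R v j) = (\<Sum>j<J'. t j * \<psi> j)" for t
    unfolding v_sum \<psi>_def by (rule linear_on_sum[OF subspace_span F_lin]) (auto intro: span_base simp: U_def)
  show thesis
  proof
    fix s t assume "(\<Sum>j<J. s j *\<^sub>R u j, \<Sum>j<J'. t j *\<^sub>R v j) \<in> L"
    then have "f (\<Sum>j<J. s j *\<^sub>R u j, \<Sum>j<J'. t j *\<^sub>R v j)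
        = F ((\<Sum>j<J. s j *\<^sub>R u j, 0) + (0, \<Sum>j<J'. t j *\<^sub>R v j))"
      using F_ext by simp
    also have "\<dots> = F (\<Sum>j<J. s j *\<^sub>R u j, 0) + F (0, \<Sum>j<J'. t j *\<^sub>R v j)"
      using F_lin u_span v_span unfolding linear_on_def by blast
    finally show "f (\<Sum>j<J. s j *\<^sub>R u j, \<Sum>j<J'. t j *\<^sub>R v j) = (\<Sum>j<J. s j * \<phi> j) + (\<Sum>j<J'. t j * \<psi> j)"
      by (simp only: F_u F_v)
  next
    show "\<bar>\<Sum>j<J. s j * \<phi> j\<bar> \<le> A * norm (\<Sum>j<J. s j *\<^sub>R u j)" for s
      using F_abs[OF u_span, of s] A by (simp add: F_u p_def)
  next
    show "\<bar>\<Sum>j<J'. t j * \<psi> j\<bar> \<le> A * norm (\<Sum>j<J'. t j *\<^sub>R v j)" for t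
      using F_abs[OF v_span, of t] A by (simp add: F_v p_def)
  qed
qed

section \<open>The space W\<close>

lemma strict_mono_lessThan_preimage:
  assumes "strict_mono (h :: nat \<Rightarrow> nat)"
  shows "\<exists>J. \<forall>j. j < J \<longleftrightarrow> h j < K"
proof -
  define J where "J = (LEAST j. K \<le> h j)"
  have "K \<le> h J"
    unfolding J_def by (rule LeastI[of _ K]) (rule seq_suble[OF assms])
  then have "j < J \<longleftrightarrow> h j < K" for j
    using not_less_Least[of j "\<lambda>j. K \<le> h j"] assms strict_mono_less_eq[OF assms, of J j]
    unfolding J_def[symmetric] by (meson le_less_trans not_le)
  then show ?thesis by blast
qed

lemma sum_strict_mono_reindex:
  assumes h: "strict_mono (h :: nat \<Rightarrow> nat)" and J: "\<And>j. j < J \<longleftrightarrow> h j < K"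
  shows "(\<Sum>i<K. if i \<in> range h then g (inv h i) else 0) = (\<Sum>j<J. g j)"
proof -
  have inj: "inj h" using strict_mono_imp_inj_on[OF h] .
  have "(\<Sum>i<K. if i \<in> range h then g (inv h i) else 0) = (\<Sum>i\<in>{i\<in>{..<K}. i \<in> range h}. g (inv h i))"
    by (rule sum.inter_filter[symmetric]) simp
  also have "{i\<in>{..<K}. i \<in> range h} = h ` {..<J}" using J by auto
  also have "(\<Sum>i\<in>h ` {..<J}. g (inv h i)) = (\<Sum>j<J. g j)"
    using inj by (simp add: sum.reindex inj_on_subset)
  finally show ?thesis .
qed

lemma sum_indicator_strict_mono:
  fixes \<phi> :: "nat \<Rightarrow> real"
  assumes "strict_mono (h :: nat \<Rightarrow> nat)" "\<And>j. j < J \<longleftrightarrow> h j < K" "i < K"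
  shows "(\<Sum>j<J. (if h j = i then 1 else 0) * \<phi> j) = (if i \<in> range h then \<phi> (inv h i) else 0)"
proof -
  have "(\<Sum>j<J. (if h j = i then 1 else 0) * \<phi> j)
      = (\<Sum>k<K. if k \<in> range h then (if h (inv h k) = i then 1 else 0) * \<phi> (inv h k) else 0)"
    by (rule sum_strict_mono_reindex[OF assms(1,2), symmetric])
  also have "\<dots> = (\<Sum>k<K. if k = i then (if i \<in> range h then \<phi> (inv h i) else 0) else 0)"
    by (rule sum.cong) (auto simp: f_inv_into_f)
  also have "\<dots> = (if i \<in> range h then \<phi> (inv h i) else 0)"
    using assms(3) by simp
  finally show ?thesis .
qed

lemma finite_nonzero_comp:
  assumes "c00 c" "inj h"
  shows "finite {i. c (h i) \<noteq> 0}"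
  using finite_vimageI[of "{i. c i \<noteq> 0}" h] assms by (simp add: c00_def vimage_def)

lemma norm_sum_indicator_le:
  fixes z :: "nat \<Rightarrow> 'c::real_normed_vector"
  assumes "inj h" "\<And>j. norm (z j) = 1"
  shows "norm (\<Sum>j\<in>{j. (if h j = i then 1 else 0) \<noteq> (0::real)}. (if h j = i then 1 else 0) *\<^sub>R z j) \<le> 1"
proof -
  have "{j. (if h j = i then 1 else 0) \<noteq> (0::real)} \<subseteq> {inv h i}"
    using assms(1) by (auto simp: inv_f_f)
  then consider "{j. (if h j = i then 1 else 0) \<noteq> (0::real)} = {}"
    | "{j. (if h j = i then 1 else 0) \<noteq> (0::real)} = {inv h i}" by blast
  then show ?thesis
    by cases (auto simp: assms(2))
qed

locale W_space =
  fixes x :: "nat \<Rightarrow> 'a::banach" and y :: "nat \<Rightarrow> 'b::banach" and m n :: "nat \<Rightarrow> nat"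
    and Cx Cy :: real
  assumes x_basis: "normalized_schauder_basis x" and y_basis: "normalized_schauder_basis y"
    and x_proj_bounded: "finite G \<Longrightarrow> norm (basis_proj x G v) \<le> Cx * norm v"
    and y_proj_bounded: "norm (basis_proj y {..<N} w) \<le> Cy * norm w"
    and strict_mono_m: "strict_mono m" and strict_mono_n: "strict_mono n"
    and covering: "range m \<union> range n = UNIV"
begin

lemma inj_m: "inj m" and inj_n: "inj n"
  using strict_mono_imp_inj_on strict_mono_m strict_mono_n by blast+

lemma x_schauder: "schauder_basis x" and x_norm: "norm (x i) = 1"
  using x_basis by (auto simp: normalized_schauder_basis_def)

lemma y_schauder: "schauder_basis y" and y_norm: "norm (y i) = 1"
  using y_basis by (auto simp: normalized_schauder_basis_def)

lemma Cx_ge_1: "1 \<le> Cx"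
proof -
  have "basis_proj x {0} (x 0) = x 0"
    by (simp add: basis_proj_def coord_basis_vector[OF x_schauder])
  then show ?thesis using x_proj_bounded[of "{0}" "x 0"] by (simp add: x_norm)
qed

lemma Cy_ge_1: "1 \<le> Cy"
proof -
  have "basis_proj y {..<1} (y 0) = y 0"
    by (simp add: basis_proj_def coord_basis_vector[OF y_schauder])
  then show ?thesis using y_proj_bounded[of 1 "y 0"] by (simp add: y_norm)
qed

lemma abs_coord_x_le: "\<bar>coord x i v\<bar> \<le> 2 * Cx * norm v"
  by (rule abs_coord_le[OF x_norm x_proj_bounded]) simp

lemma abs_coord_y_le: "\<bar>coord y i v\<bar> \<le> 2 * Cy * norm v"
  by (rule abs_coord_le[OF y_norm y_proj_bounded])

definition x_part :: "(nat \<Rightarrow> real) \<Rightarrow> 'a" where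
  "x_part c = (\<Sum>i\<in>{i. c (m i) \<noteq> 0}. c (m i) *\<^sub>R x i)"

definition y_part :: "(nat \<Rightarrow> real) \<Rightarrow> 'b" where
  "y_part c = (\<Sum>i\<in>{i. c (n i) \<noteq> 0}. c (n i) *\<^sub>R y i)"

lemma W_norm_eq: "W_norm x y m n c = max (norm (x_part c)) (norm (y_part c))"
  by (simp add: W_norm_def x_part_def y_part_def)

lemma W_norm_nonneg: "0 \<le> W_norm x y m n c"
  by (simp add: W_norm_eq le_max_iff_disj)

lemma coord_x_part: "c00 c \<Longrightarrow> coord x j (x_part c) = c (m j)"
  unfolding x_part_def by (simp add: coord_finite_sum[OF x_schauder] finite_nonzero_comp inj_m)

lemma coord_y_part: "c00 c \<Longrightarrow> coord y j (y_part c) = c (n j)"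
  unfolding y_part_def by (simp add: coord_finite_sum[OF y_schauder] finite_nonzero_comp inj_n)

lemma abs_le_W_norm:
  assumes "c00 c"
  shows "\<bar>c i\<bar> \<le> 2 * (Cx + Cy) * W_norm x y m n c"
proof (cases "i \<in> range m")
  case True
  then obtain j where "i = m j" by auto
  then have "\<bar>c i\<bar> = \<bar>coord x j (x_part c)\<bar>" using coord_x_part[OF assms] by simp
  also have "\<dots> \<le> 2 * Cx * W_norm x y m n c"
    using abs_coord_x_le[of j "x_part c"] Cx_ge_1 by (simp add: W_norm_eq order_trans)
  also have "\<dots> \<le> 2 * (Cx + Cy) * W_norm x y m n c"
    using Cy_ge_1 W_norm_nonneg[of c] by (intro mult_right_mono) auto
  finally show ?thesis .
next
  case False
  then obtain j where "i = n j" using covering by auto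
  then have "\<bar>c i\<bar> = \<bar>coord y j (y_part c)\<bar>" using coord_y_part[OF assms] by simp
  also have "\<dots> \<le> 2 * Cy * W_norm x y m n c"
    using abs_coord_y_le[of j "y_part c"] Cy_ge_1 by (simp add: W_norm_eq order_trans)
  also have "\<dots> \<le> 2 * (Cx + Cy) * W_norm x y m n c"
    using Cx_ge_1 W_norm_nonneg[of c] by (intro mult_right_mono) auto
  finally show ?thesis .
qed

lemma W_dual_set_bdd: "bdd_above {\<bar>\<Sum>i<K. a i * c i\<bar> | c. c00 c \<and> W_norm x y m n c \<le> 1}"
proof -
  have "\<bar>\<Sum>i<K. a i * c i\<bar> \<le> (\<Sum>i<K. \<bar>a i\<bar>) * (2 * (Cx + Cy))"
    if c: "c00 c" "W_norm x y m n c \<le> 1" for c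
  proof -
    have c_le: "\<bar>c i\<bar> \<le> 2 * (Cx + Cy)" for i
    proof -
      have "2 * (Cx + Cy) * W_norm x y m n c \<le> 2 * (Cx + Cy) * 1"
        using c(2) Cx_ge_1 Cy_ge_1 by (intro mult_left_mono) auto
      then show ?thesis using abs_le_W_norm[OF c(1), of i] by simp
    qed
    have "\<bar>\<Sum>i<K. a i * c i\<bar> \<le> (\<Sum>i<K. \<bar>a i\<bar> * \<bar>c i\<bar>)"
      using sum_abs[of "\<lambda>i. a i * c i" "{..<K}"] by (simp add: abs_mult)
    also have "\<dots> \<le> (\<Sum>i<K. \<bar>a i\<bar> * (2 * (Cx + Cy)))"
      by (intro sum_mono mult_left_mono c_le) simp
    finally show ?thesis by (simp add: sum_distrib_right)
  qed
  then show ?thesis by (auto intro!: bdd_aboveI)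
qed

lemma abs_sum_le_W_dual_comb_norm:
  "c00 c \<Longrightarrow> W_norm x y m n c \<le> 1 \<Longrightarrow> \<bar>\<Sum>i<K. a i * c i\<bar> \<le> W_dual_comb_norm x y m n K a"
  unfolding W_dual_comb_norm_def by (rule cSup_upper[OF _ W_dual_set_bdd]) auto

lemma W_dual_comb_norm_nonneg: "0 \<le> W_dual_comb_norm x y m n K a"
  using abs_sum_le_W_dual_comb_norm[where c = "\<lambda>_. 0" and K = K and a = a]
  by (simp add: c00_def W_norm_def)

lemma W_dual_comb_norm_least:
  assumes "\<And>c. c00 c \<Longrightarrow> W_norm x y m n c \<le> 1 \<Longrightarrow> \<bar>\<Sum>i<K. a i * c i\<bar> \<le> B"
  shows "W_dual_comb_norm x y m n K a \<le> B"
  unfolding W_dual_comb_norm_def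
proof (rule cSup_least)
  show "{\<bar>\<Sum>i<K. a i * c i\<bar> | c. c00 c \<and> W_norm x y m n c \<le> 1} \<noteq> {}"
    by (auto intro!: exI[of _ "\<lambda>_. 0"] simp: c00_def W_norm_def)
qed (use assms in blast)

lemma W_norm_scaleR: "W_norm x y m n (\<lambda>i. t * c i) = \<bar>t\<bar> * W_norm x y m n c"
proof (cases "t = 0")
  case True
  then show ?thesis by (simp add: W_norm_def)
next
  case False
  have "(\<Sum>i | t * c (m i) \<noteq> 0. (t * c (m i)) *\<^sub>R x i) = t *\<^sub>R (\<Sum>i | c (m i) \<noteq> 0. c (m i) *\<^sub>R x i)"
    "(\<Sum>i | t * c (n i) \<noteq> 0. (t * c (n i)) *\<^sub>R y i) = t *\<^sub>R (\<Sum>i | c (n i) \<noteq> 0. c (n i) *\<^sub>R y i)"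
    using False by (simp_all add: scaleR_sum_right)
  then show ?thesis
    by (simp add: W_norm_def max_mult_distrib_left)
qed

lemma abs_sum_le_W_dual_comb_norm_mult:
  assumes c: "c00 c"
  shows "\<bar>\<Sum>i<K. a i * c i\<bar> \<le> W_dual_comb_norm x y m n K a * W_norm x y m n c"
proof (cases "W_norm x y m n c = 0")
  case True
  then have "c i = 0" for i using abs_le_W_norm[OF c, of i] by simp
  then show ?thesis using W_dual_comb_norm_nonneg W_norm_nonneg by simp
next
  case False
  then have pos: "0 < W_norm x y m n c" using W_norm_nonneg[of c] by simp
  let ?t = "1 / W_norm x y m n c"
  have "c00 (\<lambda>i. ?t * c i)"
    using c unfolding c00_def by (rule finite_subset[rotated]) auto
  moreover have "W_norm x y m n (\<lambda>i. ?t * c i) \<le> 1"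
    using pos W_norm_scaleR[of ?t c] by simp
  ultimately have "\<bar>\<Sum>i<K. a i * (?t * c i)\<bar> \<le> W_dual_comb_norm x y m n K a"
    by (rule abs_sum_le_W_dual_comb_norm)
  moreover have "(\<Sum>i<K. a i * (?t * c i)) = ?t * (\<Sum>i<K. a i * c i)"
    by (simp add: sum_distrib_left mult_ac)
  ultimately show ?thesis
    using pos by (simp add: abs_mult divide_le_eq mult.commute)
qed

lemma abs_le_W_dual_comb_norm:
  assumes "i < K"
  shows "\<bar>a i\<bar> \<le> W_dual_comb_norm x y m n K a"
proof -
  let ?c = "\<lambda>k. if k = i then 1 else 0 :: real"
  have "c00 ?c" by (simp add: c00_def)
  moreover have "W_norm x y m n ?c \<le> 1"
    using norm_sum_indicator_le[OF inj_m x_norm, of i]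
      norm_sum_indicator_le[OF inj_n y_norm, of i]
    by (simp add: W_norm_def)
  moreover have "(\<Sum>k<K. a k * ?c k) = a i"
    using assms by (simp add: if_distrib[of "\<lambda>c. _ * c"] cong: if_cong)
  ultimately show ?thesis
    using abs_sum_le_W_dual_comb_norm[where c = ?c and K = K and a = a] by simp
qed

lemma bounded_linear_coord_y: "bounded_linear (coord y j)"
proof (rule bounded_linear_intro[where K = "2 * Cy"])
  show "norm (coord y j v) \<le> norm v * (2 * Cy)" for v
    using abs_coord_y_le[of j v] by (simp add: mult_ac)
qed (simp_all add: coord_add[OF y_schauder] coord_scaleR[OF y_schauder])

lemma abs_coord_comb_le_dual_comb_norm:
  assumes "norm w \<le> 1"
  shows "\<bar>\<Sum>j<J. \<psi> j * coord y j w\<bar> \<le> dual_comb_norm y J \<psi>"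
proof -
  have bl: "bounded_linear (\<lambda>v. \<Sum>j<J. \<psi> j * coord y j v)"
    by (intro bounded_linear_sum bounded_linear_const_mult bounded_linear_coord_y)
  have "\<bar>\<Sum>j<J. \<psi> j * coord y j w\<bar> \<le> dual_comb_norm y J \<psi> * norm w"
    using onorm[OF bl, of w] by (simp add: dual_comb_norm_def)
  also have "\<dots> \<le> dual_comb_norm y J \<psi>"
    using assms onorm_pos_le[OF bl] by (simp add: dual_comb_norm_def mult_left_le)
  finally show ?thesis .
qed

lemma dual_comb_norm_le:
  assumes functional: "\<And>s. \<bar>\<Sum>j<J. s j * \<psi> j\<bar> \<le> A * norm (\<Sum>j<J. s j *\<^sub>R y j)" and A: "0 \<le> A"
  shows "dual_comb_norm y J \<psi> \<le> A * Cy"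
  unfolding dual_comb_norm_def
proof (rule onorm_bound)
  show "0 \<le> A * Cy" using A Cy_ge_1 by simp
  fix u
  have "norm (\<Sum>j<J. \<psi> j * coord y j u) \<le> A * norm (basis_proj y {..<J} u)"
    using functional[of "\<lambda>j. coord y j u"] by (simp add: basis_proj_def mult.commute)
  also have "\<dots> \<le> A * (Cy * norm u)"
    using A y_proj_bounded by (rule mult_left_mono[rotated])
  finally show "norm (\<Sum>j<J. \<psi> j * coord y j u) \<le> A * Cy * norm u"
    by (simp add: mult.assoc)
qed

lemma dual_comb_norm_nonneg: "0 \<le> dual_comb_norm y J \<psi>"
  unfolding dual_comb_norm_def
  by (intro onorm_pos_le bounded_linear_sum bounded_linear_const_mult bounded_linear_coord_y)

definition coeff_embed :: "nat \<Rightarrow> nat \<Rightarrow> (nat \<Rightarrow> real) \<Rightarrow> 'a \<times> 'b" where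
  "coeff_embed JM JN d = (\<Sum>j<JM. d (m j) *\<^sub>R x j, \<Sum>j<JN. d (n j) *\<^sub>R y j)"

definition pair_functional :: "nat \<Rightarrow> (nat \<Rightarrow> real) \<Rightarrow> 'a \<times> 'b \<Rightarrow> real" where
  "pair_functional K a g = (\<Sum>i<K. a i *
     (if i \<in> range m then coord x (inv m i) (fst g) else coord y (inv n i) (snd g)))"

lemma subspace_coeff_embed_image: "subspace (coeff_embed JM JN ` {d. \<forall>i\<ge>K. d i = 0})"
proof -
  have add: "coeff_embed JM JN d + coeff_embed JM JN d' = coeff_embed JM JN (\<lambda>i. d i + d' i)" for d d'
    by (simp add: coeff_embed_def sum.distrib scaleR_add_left)
  have scaleR: "t *\<^sub>R coeff_embed JM JN d = coeff_embed JM JN (\<lambda>i. t * d i)" for t d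
    by (simp add: coeff_embed_def scaleR_sum_right)
  show ?thesis
    unfolding subspace_def
  proof safe
    show "0 \<in> coeff_embed JM JN ` {d. \<forall>i\<ge>K. d i = 0}"
      by (rule image_eqI[of _ _ "\<lambda>_. 0"]) (auto simp: coeff_embed_def zero_prod_def)
  qed (auto simp: add scaleR)
qed

lemma linear_on_pair_functional: "linear_on L (pair_functional K a)"
proof -
  have "pair_functional K a (g + h) = pair_functional K a g + pair_functional K a h" for g h
    unfolding pair_functional_def sum.distrib[symmetric]
    by (rule sum.cong) (simp_all add: coord_add[OF x_schauder] coord_add[OF y_schauder] distrib_left)
  moreover have "pair_functional K a (t *\<^sub>R g) = t * pair_functional K a g" for t g
    unfolding pair_functional_def sum_distrib_left
    by (rule sum.cong) (simp_all add: coord_scaleR[OF x_schauder] coord_scaleR[OF y_schauder])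
  ultimately show ?thesis
    by (simp add: linear_on_def)
qed

context
  fixes K JM JN :: nat
  assumes JM: "\<And>j. j < JM \<longleftrightarrow> m j < K" and JN: "\<And>j. j < JN \<longleftrightarrow> n j < K"
begin

lemma W_norm_coeff_embed:
  assumes "\<And>i. K \<le> i \<Longrightarrow> d i = 0"
  shows "W_norm x y m n d = max (norm (fst (coeff_embed JM JN d))) (norm (snd (coeff_embed JM JN d)))"
proof -
  have "(\<Sum>i\<in>{i. d (m i) \<noteq> 0}. d (m i) *\<^sub>R x i) = (\<Sum>j<JM. d (m j) *\<^sub>R x j)"
    by (rule sum.mono_neutral_left) (use assms JM in \<open>auto simp flip: not_less\<close>)
  moreover have "(\<Sum>i\<in>{i. d (n i) \<noteq> 0}. d (n i) *\<^sub>R y i) = (\<Sum>j<JN. d (n j) *\<^sub>R y j)"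
    by (rule sum.mono_neutral_left) (use assms JN in \<open>auto simp flip: not_less\<close>)
  ultimately show ?thesis by (simp add: W_norm_def coeff_embed_def)
qed

lemma pair_functional_coeff_embed: "pair_functional K a (coeff_embed JM JN d) = (\<Sum>i<K. a i * d i)"
proof -
  have "(if i \<in> range m then coord x (inv m i) (fst (coeff_embed JM JN d))
      else coord y (inv n i) (snd (coeff_embed JM JN d))) = d i" if "i < K" for i
  proof (cases "i \<in> range m")
    case True
    then obtain j where j: "i = m j" by auto
    moreover have "j < JM" using JM that j by simp
    ultimately show ?thesis
      using inj_m
      by (simp add: coeff_embed_def coord_finite_sum[OF x_schauder] inv_f_f)
  next
    case False
    then obtain j where j: "i = n j" using covering by auto
    moreover have "j < JN" using JN that j by simp
    ultimately show ?thesis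
      using False inj_n
      by (simp add: coeff_embed_def coord_finite_sum[OF y_schauder] inv_f_f)
  qed
  then show ?thesis
    unfolding pair_functional_def by (intro sum.cong) simp_all
qed

lemma pair_functional_le:
  assumes "g \<in> coeff_embed JM JN ` {d. \<forall>i\<ge>K. d i = 0}"
  shows "pair_functional K a g \<le> W_dual_comb_norm x y m n K a * max (norm (fst g)) (norm (snd g))"
proof -
  obtain d where d: "\<And>i. K \<le> i \<Longrightarrow> d i = 0" and g: "g = coeff_embed JM JN d"
    using assms by blast
  have "c00 d"
    unfolding c00_def by (rule finite_subset[of _ "{..<K}"]) (use d not_less in auto)
  then have "pair_functional K a g \<le> W_dual_comb_norm x y m n K a * W_norm x y m n d"
    unfolding g pair_functional_coeff_embed
    by (rule order_trans[OF abs_ge_self abs_sum_le_W_dual_comb_norm_mult])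
  then show ?thesis by (simp add: W_norm_coeff_embed[OF d] g)
qed

lemma W_dual_decomposition:
  obtains \<phi> \<psi> where
    "\<And>i. i < K \<Longrightarrow> a i = (if i \<in> range m then \<phi> (inv m i) else 0) + (if i \<in> range n then \<psi> (inv n i) else 0)"
    and "\<And>s. \<bar>\<Sum>j<JM. s j * \<phi> j\<bar> \<le> W_dual_comb_norm x y m n K a * norm (\<Sum>j<JM. s j *\<^sub>R x j)"
    and "\<And>s. \<bar>\<Sum>j<JN. s j * \<psi> j\<bar> \<le> W_dual_comb_norm x y m n K a * norm (\<Sum>j<JN. s j *\<^sub>R y j)"
proof -
  let ?L = "coeff_embed JM JN ` {d. \<forall>i\<ge>K. d i = 0}"
  obtain \<phi> \<psi> where identity: "\<And>s t. (\<Sum>j<JM. s j *\<^sub>R x j, \<Sum>j<JN. t j *\<^sub>R y j) \<in> ?L \<Longrightarrow>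
      pair_functional K a (\<Sum>j<JM. s j *\<^sub>R x j, \<Sum>j<JN. t j *\<^sub>R y j) = (\<Sum>j<JM. s j * \<phi> j) + (\<Sum>j<JN. t j * \<psi> j)"
    and "\<And>s. \<bar>\<Sum>j<JM. s j * \<phi> j\<bar> \<le> W_dual_comb_norm x y m n K a * norm (\<Sum>j<JM. s j *\<^sub>R x j)"
    and "\<And>t. \<bar>\<Sum>j<JN. t j * \<psi> j\<bar> \<le> W_dual_comb_norm x y m n K a * norm (\<Sum>j<JN. t j *\<^sub>R y j)"
    using Hahn_Banach_product_split[OF subspace_coeff_embed_image linear_on_pair_functional
        W_dual_comb_norm_nonneg pair_functional_le, where J = JM and u = x and J' = JN and v = y]
    by blast
  moreover have "a i = (if i \<in> range m then \<phi> (inv m i) else 0) + (if i \<in> range n then \<psi> (inv n i) else 0)"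
    if i: "i < K" for i
  proof -
    define d where "d k = (if k = i then 1 else 0 :: real)" for k
    have "coeff_embed JM JN d \<in> ?L" using i by (auto simp: d_def)
    then have "(\<Sum>k<K. a k * d k) = (\<Sum>j<JM. d (m j) * \<phi> j) + (\<Sum>j<JN. d (n j) * \<psi> j)"
      using identity[of "\<lambda>j. d (m j)" "\<lambda>j. d (n j)"] pair_functional_coeff_embed[of a d]
      by (simp add: coeff_embed_def)
    moreover have "(\<Sum>k<K. a k * d k) = a i"
      using i by (simp add: d_def if_distrib[of "\<lambda>c. _ * c"] cong: if_cong)
    ultimately show ?thesis
      using sum_indicator_strict_mono[OF strict_mono_m JM i, of \<phi>]
        sum_indicator_strict_mono[OF strict_mono_n JN i, of \<psi>]
      by (simp add: d_def)
  qed
  ultimately show thesis using that by blast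
qed

lemma sum_mult_split:
  fixes \<phi>1 \<psi>1 \<phi>2 \<psi>2 :: "nat \<Rightarrow> real"
  assumes a: "\<And>i. i < K \<Longrightarrow> a i = (if i \<in> range m then \<phi>1 (inv m i) else 0) + (if i \<in> range n then \<psi>1 (inv n i) else 0)"
    and b: "\<And>i. i < K \<Longrightarrow> b i = (if i \<in> range m then \<phi>2 (inv m i) else 0) + (if i \<in> range n then \<psi>2 (inv n i) else 0)"
  defines "\<beta>1 \<equiv> \<lambda>i. if i \<in> range n then \<psi>1 (inv n i) else 0"
  shows "(\<Sum>i<K. a i * b i * c i) = (\<Sum>j<JM. \<phi>1 j * (b (m j) * c (m j)))
      + (\<Sum>j<JM. \<phi>2 j * (\<beta>1 (m j) * c (m j))) + (\<Sum>j<JN. \<psi>1 j * \<psi>2 j * c (n j))"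
proof -
  have "a i * b i * c i = (if i \<in> range m then \<phi>1 (inv m i) * (b (m (inv m i)) * c (m (inv m i))) else 0)
      + (if i \<in> range m then \<phi>2 (inv m i) * (\<beta>1 (m (inv m i)) * c (m (inv m i))) else 0)
      + (if i \<in> range n then \<psi>1 (inv n i) * \<psi>2 (inv n i) * c (n (inv n i)) else 0)"
    if "i < K" for i
    using a[OF that] b[OF that] by (auto simp: \<beta>1_def f_inv_into_f algebra_simps)
  then have "(\<Sum>i<K. a i * b i * c i)
      = (\<Sum>i<K. if i \<in> range m then \<phi>1 (inv m i) * (b (m (inv m i)) * c (m (inv m i))) else 0)
      + (\<Sum>i<K. if i \<in> range m then \<phi>2 (inv m i) * (\<beta>1 (m (inv m i)) * c (m (inv m i))) else 0)
      + (\<Sum>i<K. if i \<in> range n then \<psi>1 (inv n i) * \<psi>2 (inv n i) * c (n (inv n i)) else 0)"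
    by (simp add: sum.distrib)
  then show ?thesis
    by (simp only: sum_strict_mono_reindex[OF strict_mono_m JM, of "\<lambda>j. \<phi>1 j * (b (m j) * c (m j))"]
        sum_strict_mono_reindex[OF strict_mono_m JM, of "\<lambda>j. \<phi>2 j * (\<beta>1 (m j) * c (m j))"]
        sum_strict_mono_reindex[OF strict_mono_n JN, of "\<lambda>j. \<psi>1 j * \<psi>2 j * c (n j)"])
qed

end

lemma norm_sum_x_coeffs_le:
  assumes "c00 c" "W_norm x y m n c \<le> 1" "finite H"
  shows "norm (\<Sum>j\<in>H. c (m j) *\<^sub>R x j) \<le> Cx"
proof -
  have "(\<Sum>j\<in>H. c (m j) *\<^sub>R x j) = basis_proj x H (x_part c)"
    by (simp add: basis_proj_def coord_x_part[OF assms(1)])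
  also have "norm \<dots> \<le> Cx * norm (x_part c)"
    using assms(3) by (rule x_proj_bounded)
  also have "\<dots> \<le> Cx"
    using assms(2) Cx_ge_1 by (simp add: W_norm_eq mult_left_le)
  finally show ?thesis .
qed

lemma abs_sum_dual_product_le:
  assumes submult: "dual_comb_norm y J (\<lambda>j. \<psi>1 j * \<psi>2 j) \<le> Cs * dual_comb_norm y J \<psi>1 * dual_comb_norm y J \<psi>2"
    and "0 \<le> Cs" "0 \<le> A" "0 \<le> B" "norm w \<le> 1"
    and \<psi>1: "\<And>s. \<bar>\<Sum>j<J. s j * \<psi>1 j\<bar> \<le> A * norm (\<Sum>j<J. s j *\<^sub>R y j)"
    and \<psi>2: "\<And>s. \<bar>\<Sum>j<J. s j * \<psi>2 j\<bar> \<le> B * norm (\<Sum>j<J. s j *\<^sub>R y j)"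
  shows "\<bar>\<Sum>j<J. \<psi>1 j * \<psi>2 j * coord y j w\<bar> \<le> Cs * Cy\<^sup>2 * A * B"
proof -
  have "\<bar>\<Sum>j<J. \<psi>1 j * \<psi>2 j * coord y j w\<bar> \<le> dual_comb_norm y J (\<lambda>j. \<psi>1 j * \<psi>2 j)"
    using assms(5) by (rule abs_coord_comb_le_dual_comb_norm)
  also have "\<dots> \<le> Cs * dual_comb_norm y J \<psi>1 * dual_comb_norm y J \<psi>2"
    by (rule submult)
  also have "\<dots> \<le> Cs * (A * Cy) * (B * Cy)"
  proof (rule mult_mono)
    show "Cs * dual_comb_norm y J \<psi>1 \<le> Cs * (A * Cy)"
      using dual_comb_norm_le[OF \<psi>1 \<open>0 \<le> A\<close>] \<open>0 \<le> Cs\<close> by (rule mult_left_mono)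
    show "0 \<le> Cs * (A * Cy)"
      using \<open>0 \<le> Cs\<close> \<open>0 \<le> A\<close> Cy_ge_1 by simp
  qed (simp_all add: dual_comb_norm_le[OF \<psi>2 \<open>0 \<le> B\<close>] dual_comb_norm_nonneg)
  finally show ?thesis by (simp add: power2_eq_square mult_ac)
qed

lemma abs_sum_mult_le:
  assumes submult: "\<And>J a b. dual_comb_norm y J (\<lambda>i. a i * b i) \<le> Cs * dual_comb_norm y J a * dual_comb_norm y J b"
    and Cs: "0 \<le> Cs" and c: "c00 c" "W_norm x y m n c \<le> 1"
  shows "\<bar>\<Sum>i<K. a i * b i * c i\<bar>
    \<le> (4 * Cx + Cs * Cy\<^sup>2) * W_dual_comb_norm x y m n K a * W_dual_comb_norm x y m n K b"
proof -
  obtain JM where JM: "\<And>j. j < JM \<longleftrightarrow> m j < K"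
    using strict_mono_lessThan_preimage[OF strict_mono_m] by blast
  obtain JN where JN: "\<And>j. j < JN \<longleftrightarrow> n j < K"
    using strict_mono_lessThan_preimage[OF strict_mono_n] by blast
  define A where "A = W_dual_comb_norm x y m n K a"
  define B where "B = W_dual_comb_norm x y m n K b"
  have A: "0 \<le> A" and B: "0 \<le> B"
    unfolding A_def B_def by (rule W_dual_comb_norm_nonneg)+
  obtain \<phi>1 \<psi>1 where
    a: "\<And>i. i < K \<Longrightarrow> a i = (if i \<in> range m then \<phi>1 (inv m i) else 0) + (if i \<in> range n then \<psi>1 (inv n i) else 0)"
    and \<phi>1: "\<And>s. \<bar>\<Sum>j<JM. s j * \<phi>1 j\<bar> \<le> A * norm (\<Sum>j<JM. s j *\<^sub>R x j)"
    and \<psi>1: "\<And>s. \<bar>\<Sum>j<JN. s j * \<psi>1 j\<bar> \<le> A * norm (\<Sum>j<JN. s j *\<^sub>R y j)"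
    using W_dual_decomposition[OF JM JN, of a] unfolding A_def by blast
  obtain \<phi>2 \<psi>2 where
    b: "\<And>i. i < K \<Longrightarrow> b i = (if i \<in> range m then \<phi>2 (inv m i) else 0) + (if i \<in> range n then \<psi>2 (inv n i) else 0)"
    and \<phi>2: "\<And>s. \<bar>\<Sum>j<JM. s j * \<phi>2 j\<bar> \<le> B * norm (\<Sum>j<JM. s j *\<^sub>R x j)"
    and \<psi>2: "\<And>s. \<bar>\<Sum>j<JN. s j * \<psi>2 j\<bar> \<le> B * norm (\<Sum>j<JN. s j *\<^sub>R y j)"
    using W_dual_decomposition[OF JM JN, of b] unfolding B_def by blast
  define \<beta>1 where "\<beta>1 i = (if i \<in> range n then \<psi>1 (inv n i) else 0)" for i
  have subsums: "norm (\<Sum>j\<in>H. c (m j) *\<^sub>R x j) \<le> Cx" if "H \<subseteq> {..<JM}" for H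
    using norm_sum_x_coeffs_le[OF c] that by (simp add: finite_subset)
  have "\<bar>b (m j)\<bar> \<le> B" if "j < JM" for j
    using abs_le_W_dual_comb_norm JM that unfolding B_def by blast
  then have X1: "\<bar>\<Sum>j<JM. \<phi>1 j * (b (m j) * c (m j))\<bar> \<le> 2 * A * B * Cx"
    by (intro abs_sum_functional_multiplier_le[where u = "\<lambda>j. c (m j)", OF \<phi>1 A subsums _ B])
  have "\<bar>\<beta>1 i\<bar> \<le> A" if "i < K" for i
    using abs_functional_coeff_le[OF \<psi>1 y_norm] JN A that
    by (auto simp: \<beta>1_def inj_n inv_f_f)
  then have X2: "\<bar>\<Sum>j<JM. \<phi>2 j * (\<beta>1 (m j) * c (m j))\<bar> \<le> 2 * B * A * Cx"
    using JM by (intro abs_sum_functional_multiplier_le[OF \<phi>2 B subsums _ A]) auto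
  have "norm (y_part c) \<le> 1" using c(2) by (simp add: W_norm_eq)
  then have Y: "\<bar>\<Sum>j<JN. \<psi>1 j * \<psi>2 j * c (n j)\<bar> \<le> Cs * Cy\<^sup>2 * A * B"
    using abs_sum_dual_product_le[OF submult Cs A B _ \<psi>1 \<psi>2, of "y_part c"]
    by (simp add: coord_y_part[OF c(1)])
  have "(\<Sum>i<K. a i * b i * c i) = (\<Sum>j<JM. \<phi>1 j * (b (m j) * c (m j)))
      + (\<Sum>j<JM. \<phi>2 j * (\<beta>1 (m j) * c (m j))) + (\<Sum>j<JN. \<psi>1 j * \<psi>2 j * c (n j))"
    unfolding \<beta>1_def by (rule sum_mult_split[OF JM JN a b])
  then have "\<bar>\<Sum>i<K. a i * b i * c i\<bar> \<le> 2 * A * B * Cx + 2 * B * A * Cx + Cs * Cy\<^sup>2 * A * B"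
    using X1 X2 Y by linarith
  then show ?thesis
    by (simp add: A_def B_def algebra_simps)
qed

theorem W_dual_comb_norm_mult_le:
  assumes "\<And>J a b. dual_comb_norm y J (\<lambda>i. a i * b i) \<le> Cs * dual_comb_norm y J a * dual_comb_norm y J b"
    and "0 \<le> Cs"
  shows "W_dual_comb_norm x y m n K (\<lambda>i. a i * b i)
    \<le> (4 * Cx + Cs * Cy\<^sup>2) * W_dual_comb_norm x y m n K a * W_dual_comb_norm x y m n K b"
  by (rule W_dual_comb_norm_least) (rule abs_sum_mult_le[OF assms])

theorem submultiplicative_W_dual_comb_norm:
  assumes "submultiplicative (dual_comb_norm y)"
  shows "submultiplicative (W_dual_comb_norm x y m n)"
proof -
  obtain Cs where Cs: "0 < Cs"
    "\<And>J a b. dual_comb_norm y J (\<lambda>i. a i * b i) \<le> Cs * dual_comb_norm y J a * dual_comb_norm y J b"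
    using assms unfolding submultiplicative_def by blast
  have "0 < 4 * Cx + Cs * Cy\<^sup>2" using Cs(1) Cx_ge_1 by (simp add: add_pos_nonneg)
  with W_dual_comb_norm_mult_le[OF Cs(2)] Cs(1) show ?thesis
    unfolding submultiplicative_def by (metis less_imp_le)
qed

end

theorem lemma1p8:
  fixes x :: "nat \<Rightarrow> 'a::banach" and y :: "nat \<Rightarrow> 'b::banach" and m n :: "nat \<Rightarrow> nat"
  assumes "normalized_schauder_basis x" and "unconditional_basis x"
    and "normalized_schauder_basis y"
    and "submultiplicative (dual_comb_norm y)"
    and "strict_mono m" and "strict_mono n" and "range m \<union> range n = UNIV"
  shows "submultiplicative (W_dual_comb_norm x y m n)"
proof -
  obtain Cx where "\<forall>G v. finite G \<longrightarrow> norm (basis_proj x G v) \<le> Cx * norm v"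
    using unconditional_basis_proj_bounded[OF assms(1,2)] by blast
  moreover obtain Cy where "\<forall>N v. norm (basis_proj y {..<N} v) \<le> Cy * norm v"
    using schauder_basis_partial_sums_bounded[OF assms(3)] by blast
  ultimately interpret W_space x y m n Cx Cy
    using assms(1,3,5-7) by unfold_locales auto
  show ?thesis
    using assms(4) by (rule submultiplicative_W_dual_comb_norm)
qed

end
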